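(* Let $g>0$ and $n\ge 2$ be an integer, and put $N=n!$. For $x\in(0,1]$ let $\alpha_0(x)\in(0,\pi]$ be defined by $$\cos\Big(\frac{\alpha_0(x)}{2}\Big)=\frac{1-x}{\sqrt{1-2x+2x^2}},$$ and let $T(x)=\frac{2}{g}\ln\Big(\cot\frac{\alpha_0(x)}{4}\Big)$. Then for every integer $s$ with $1\le s\le N$, $$\sum_{i=0}^{\lfloor \log_2 s\rfloor} T\Big(\frac{\lfloor s/2^i\rfloor}{N}\Big)\;\le\;\frac{2}{g}\,\log(2s)\,\Big(\log_2\frac{N}{\sqrt{s}}+1\Big).$$
   Context: $\ln$ and $\log$ denote the natural logarithm and $\log_2$ the base-2 logarithm. $T(x)$ is the nonlinear (Gross–Pitaevskii) evolution time needed to make the single-qubit states $\frac{(N-t)|0\rangle+t|1\rangle}{\sqrt{N^2-2Nt+2t^2}}$ with $t=0$ and $t=xN$ orthogonal. *)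

theory Defs
  imports "HOL-Analysis.Analysis"
begin

definition alpha0 :: "real \<Rightarrow> real" where
  "alpha0 x = 2 * arccos ((1 - x) / sqrt (1 - 2*x + 2*x^2))"

definition Tevo :: "real \<Rightarrow> real \<Rightarrow> real" where
  "Tevo g x = (2 / g) * ln (cot (alpha0 x / 4))"

end

theory Submission
  imports Defs
begin

(* The half-angle formula cot(theta/2) = (1 + cos theta)/sin theta gives
   cot(alpha_0(x)/4) = (sqrt(1 - 2x + 2x^2) + 1 - x)/x <= 2/x on (0,1], hence T(x) <= (2/g) ln(2/x).
   With k = floor(log_2 s) we have floor(s/2^i) >= 2^(k-i), so the i-th summand is at most
   (2/g)(ln(2N) - (k-i) ln 2), and the sum is at most (2/g)((k+1) ln(2N) - ln 2 k(k+1)/2).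
   Because ln(2s) <= ln(2N), this quadratic in k still increases up to k = t = log_2 s, and its value
   at t is exactly the right-hand side. *)

lemma cot_half: "cot (x / 2) = (1 + cos x) / sin x"
  using tan_half[of "x / 2"] by (simp add: cot_altdef add.commute)

lemma cot_quarter_alpha0:
  fixes x :: real
  assumes "x > 0"
  shows "cot (alpha0 x / 4) = (sqrt (1 - 2*x + 2*x^2) + 1 - x) / x"
proof -
  define r where "r = sqrt (1 - 2*x + 2*x^2)"
  have radicand: "1 - 2*x + 2*x^2 = (1 - x)^2 + x^2"
    by (simp add: power2_eq_square algebra_simps)
  have r_sq: "r^2 = (1 - x)^2 + x^2"
    unfolding r_def radicand by simp
  have "r > 0"
    unfolding r_def radicand using assms by (simp add: add_nonneg_pos)
  have "\<bar>1 - x\<bar> < r"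
    unfolding r_def radicand using assms by (intro real_less_rsqrt) simp
  define c where "c = (1 - x) / r"
  have c_bounds: "-1 \<le> c" "c \<le> 1"
    unfolding c_def using \<open>\<bar>1 - x\<bar> < r\<close> \<open>r > 0\<close> by (auto simp: field_simps abs_less_iff)
  have "1 - c^2 = (x / r)^2"
    unfolding c_def using r_sq \<open>r > 0\<close> by (simp add: field_simps)
  then have sin_arccos_c: "sin (arccos c) = x / r"
    using c_bounds assms \<open>r > 0\<close> by (simp add: sin_arccos)
  have "alpha0 x / 4 = arccos c / 2"
    unfolding alpha0_def c_def r_def by simp
  then have "cot (alpha0 x / 4) = (1 + c) / (x / r)"
    using c_bounds by (simp add: cot_half sin_arccos_c)
  also have "\<dots> = (r + 1 - x) / x"
    unfolding c_def using assms \<open>r > 0\<close> by (simp add: field_simps)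
  finally show ?thesis
    unfolding r_def .
qed

lemma Tevo_le_ln:
  fixes g x :: real
  assumes "g > 0" "0 < x" "x \<le> 1"
  shows "Tevo g x \<le> (2 / g) * ln (2 / x)"
proof -
  define r where "r = sqrt (1 - 2*x + 2*x^2)"
  have "1 - 2*x + 2*x^2 \<le> 1"
    using assms by (simp add: power2_eq_square mult_le_cancel_left1)
  then have "r \<le> 1"
    unfolding r_def by simp
  have "x^2 \<le> 1 - 2*x + 2*x^2"
    using power2_diff[of 1 x] zero_le_power2[of "1 - x"] by simp
  then have "x \<le> r"
    unfolding r_def by (rule real_le_rsqrt)
  have "cot (alpha0 x / 4) = (r + 1 - x) / x"
    unfolding r_def using assms(2) by (rule cot_quarter_alpha0)
  moreover have "0 < (r + 1 - x) / x" "(r + 1 - x) / x \<le> 2 / x"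
    using assms \<open>r \<le> 1\<close> \<open>x \<le> r\<close> by (auto simp: divide_right_mono)
  ultimately have "ln (cot (alpha0 x / 4)) \<le> ln (2 / x)"
    by (simp add: ln_mono)
  then show ?thesis
    unfolding Tevo_def using assms(1) by (intro mult_left_mono) auto
qed

lemma Tevo_ratio_le:
  fixes g :: real and j m N :: nat
  assumes "g > 0" "2 ^ j \<le> m" "m \<le> N"
  shows "Tevo g (real m / real N) \<le> (2 / g) * (ln (2 * real N) - real j * ln 2)"
proof -
  have "0 < real m" "real m \<le> real N" "2 ^ j \<le> real m"
    using assms(2,3) order_trans[OF one_le_power[of 2 j] assms(2)]
    by (auto simp flip: of_nat_le_iff)
  have "Tevo g (real m / real N) \<le> (2 / g) * ln (2 * real N / real m)"
    using Tevo_le_ln[of g "real m / real N"] assms \<open>0 < real m\<close> \<open>real m \<le> real N\<close> by simp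
  also have "\<dots> \<le> (2 / g) * ln (2 * real N / 2 ^ j)"
  proof -
    have "2 * real N / real m \<le> 2 * real N / 2 ^ j"
      using \<open>0 < real m\<close> \<open>2 ^ j \<le> real m\<close> by (simp add: frac_le)
    then show ?thesis
      using assms(1) \<open>0 < real m\<close> \<open>real m \<le> real N\<close> by (simp add: divide_right_mono)
  qed
  also have "\<dots> = (2 / g) * (ln (2 * real N) - real j * ln 2)"
    using \<open>0 < real m\<close> \<open>real m \<le> real N\<close> by (simp add: ln_div ln_realpow)
  finally show ?thesis .
qed

lemma sum_Tevo_halvings_le:
  fixes g :: real and k s N :: nat
  assumes "g > 0" "2 ^ k \<le> s" "s \<le> N"
  shows "(\<Sum>i = 0..k. Tevo g (real (s div 2 ^ i) / real N))
         \<le> (2 / g) * ((real k + 1) * ln (2 * real N) - ln 2 * (real k * (real k + 1) / 2))"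
proof -
  have "(\<Sum>i = 0..k. Tevo g (real (s div 2 ^ i) / real N))
        \<le> (\<Sum>i = 0..k. (2 / g) * (ln (2 * real N) - real (k - i) * ln 2))"
  proof (rule sum_mono)
    fix i assume "i \<in> {0..k}"
    then have "2 ^ (k - i) * 2 ^ i \<le> s"
      using assms(2) by (simp flip: power_add)
    then have "2 ^ (k - i) \<le> s div 2 ^ i"
      by (simp add: less_eq_div_iff_mult_less_eq)
    moreover have "s div 2 ^ i \<le> N"
      using assms(3) div_le_dividend order_trans by blast
    ultimately show "Tevo g (real (s div 2 ^ i) / real N) \<le> (2 / g) * (ln (2 * real N) - real (k - i) * ln 2)"
      by (rule Tevo_ratio_le[OF assms(1)])
  qed
  also have "\<dots> = (\<Sum>j = 0..k. (2 / g) * (ln (2 * real N) - real j * ln 2))"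
    by (subst sum.atLeastAtMost_rev) simp
  also have "\<dots> = (2 / g) * (\<Sum>j = 0..k. ln (2 * real N) - real j * ln 2)"
    by (simp add: sum_distrib_left)
  also have "(\<Sum>j = 0..k. ln (2 * real N) - real j * ln 2)
             = (real k + 1) * ln (2 * real N) - ln 2 * (\<Sum>j = 0..k. real j)"
    by (simp add: sum_subtractf sum_distrib_left mult.commute)
  also have "(\<Sum>j = 0..k. real j) = real k * (real k + 1) / 2"
    using double_gauss_sum[of k, where ?'a = real] by simp
  finally show ?thesis .
qed

lemma linear_minus_triangular_mono:
  fixes a b k t :: real
  assumes "0 \<le> a" "k \<le> t" "a * (t + 1) \<le> b"
  shows "(k + 1) * b - a * (k * (k + 1) / 2) \<le> (t + 1) * b - a * (t * (t + 1) / 2)"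
proof -
  have "a * (t + k + 1) \<le> 2 * b"
    using assms mult_left_mono[OF assms(2,1)] by (simp add: algebra_simps)
  then have "0 \<le> (t - k) * (b - a * (t + k + 1) / 2)"
    using assms(2) by simp
  also have "\<dots> = ((t + 1) * b - a * (t * (t + 1) / 2)) - ((k + 1) * b - a * (k * (k + 1) / 2))"
    by (simp add: algebra_simps diff_divide_distrib add_divide_distrib)
  finally show ?thesis by simp
qed

theorem lemma1:
  fixes g :: real and n s :: nat
  assumes "g > 0" and "n \<ge> 2" and "1 \<le> s" and "s \<le> fact n"
  shows "(\<Sum>i = 0..nat \<lfloor>log 2 (real s)\<rfloor>.
            Tevo g (real (s div 2 ^ i) / real (fact n :: nat)))
         \<le> (2 / g) * ln (2 * real s) * (log 2 (real (fact n :: nat) / sqrt (real s)) + 1)"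
proof -
  define N where "N = (fact n :: nat)"
  define t where "t = log 2 (real s)"
  define k where "k = nat \<lfloor>t\<rfloor>"
  have "s \<le> N"
    using assms(4) by (simp add: N_def)
  then have "real s \<le> real N"
    by (rule of_nat_mono)
  have "0 \<le> t" "0 < real s"
    using assms(3) by (simp_all add: t_def)
  then have "real k \<le> t"
    unfolding k_def by linarith
  have "2 ^ k \<le> s"
    using floor_log_nat_eq_powr_iff[of 2 s k] assms(3) \<open>0 \<le> t\<close> by (simp add: k_def t_def)
  have ln_2s: "ln (2 * real s) = ln 2 * (t + 1)"
    using \<open>0 < real s\<close> by (simp add: t_def log_def ln_mult algebra_simps)
  have "ln 2 * (t + 1) \<le> ln (2 * real N)"
    unfolding ln_2s[symmetric] using \<open>0 < real s\<close> \<open>real s \<le> real N\<close> by simp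
  have "(\<Sum>i = 0..k. Tevo g (real (s div 2 ^ i) / real N))
        \<le> (2 / g) * ((real k + 1) * ln (2 * real N) - ln 2 * (real k * (real k + 1) / 2))"
    using sum_Tevo_halvings_le assms(1) \<open>2 ^ k \<le> s\<close> \<open>s \<le> N\<close> by simp
  also have "\<dots> \<le> (2 / g) * ((t + 1) * ln (2 * real N) - ln 2 * (t * (t + 1) / 2))"
    using linear_minus_triangular_mono[OF _ \<open>real k \<le> t\<close> \<open>ln 2 * (t + 1) \<le> ln (2 * real N)\<close>] assms(1)
    by (intro mult_left_mono) auto
  also have "\<dots> = (2 / g) * ln (2 * real s) * (log 2 (real N / sqrt (real s)) + 1)"
  proof -
    have log_eq: "log 2 (real N / sqrt (real s)) + 1 = ln (2 * real N) / ln 2 - t / 2"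
      using \<open>0 < real s\<close> \<open>real s \<le> real N\<close>
      by (simp add: t_def log_def ln_div ln_sqrt ln_mult field_simps)
    show ?thesis
      unfolding ln_2s log_eq using ln_gt_zero[of "2::real"] assms(1) by (simp add: field_simps)
  qed
  finally show ?thesis
    unfolding N_def k_def t_def .
qed

end
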